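(* Let $X$ be a one-dimensional Lévy process with $\mathbb E[|X(1)|]<\infty$ that is not a driftless compound Poisson process. Let $q,r>0$, $\alpha=q+r$, $\beta>1$, and $w:[0,\infty)\to\mathbb R$ non-decreasing, continuous and concave with $w'_+(0)\le\beta\alpha/r$ and $w'_+(\infty):=\lim_{x\to\infty}w'_+(x)\in[0,\alpha/r)$. Then the function $g$ is non-increasing on $[0,\infty)$ and $$\lim_{b\to\infty}g(b)=\frac r\alpha w'_+(\infty)<1.$$
   Context: $\mathbb P_x$, $\mathbb E_x$: law and expectation of $X$ started at $x$. For $b\in\mathbb R$, $Y^b(t):=X(t)-\max\{\sup_{s\in[0,t]}(X(s)-b),0\}$ is $X$ reflected at the upper barrier $b$, and $\kappa^{b,-}_a:=\inf\{t\ge0:Y^b(t)<a\}$. $w'_+$ is the right derivative of $w$. For $b\ge0$, $$g(b):=\beta\,\mathbb E_b\big[e^{-\alpha\kappa^{b,-}_0}\big]+r\,\mathbb E_b\Big[\int_0^{\kappa^{b,-}_0}e^{-\alpha t}w'_+(Y^b(t))\,\mathrm dt\Big].$$ *)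

theory Defs
  imports "HOL-Probability.Probability"
begin

definition levy_process :: "'a measure \<Rightarrow> (real \<Rightarrow> 'a \<Rightarrow> real) \<Rightarrow> bool" where
  "levy_process M X \<longleftrightarrow>
     prob_space M \<and>
     (\<forall>t\<ge>0. X t \<in> borel_measurable M) \<and>
     (\<forall>\<omega>\<in>space M. X 0 \<omega> = 0) \<and>
     (\<forall>\<omega>\<in>space M. \<forall>t\<ge>0. continuous (at_right t) (\<lambda>s. X s \<omega>)) \<and>
     (\<forall>\<omega>\<in>space M. \<forall>t>0. \<exists>l. ((\<lambda>s. X s \<omega>) \<longlongrightarrow> l) (at_left t)) \<and>
     (\<forall>(n::nat) (ts::nat \<Rightarrow> real). 0 \<le> ts 0 \<and> (\<forall>i<n. ts i \<le> ts (Suc i)) \<longrightarrow>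
        prob_space.indep_vars M (\<lambda>_. borel) (\<lambda>i \<omega>. X (ts (Suc i)) \<omega> - X (ts i) \<omega>) {..<n}) \<and>
     (\<forall>s\<ge>0. \<forall>t\<ge>0. distr M borel (\<lambda>\<omega>. X (s + t) \<omega> - X s \<omega>) = distr M borel (X t))"

definition driftless_compound_poisson :: "'a measure \<Rightarrow> (real \<Rightarrow> 'a \<Rightarrow> real) \<Rightarrow> bool" where
  "driftless_compound_poisson M X \<longleftrightarrow>
     (\<exists>Lm::real measure. finite_measure Lm \<and> sets Lm = sets borel \<and>
        (\<forall>t\<ge>0. \<forall>\<theta>. char (distr M borel (X t)) \<theta> =
            exp (complex_of_real t * (CLINT x|Lm. iexp (\<theta> * x) - 1))))"

definition rderiv :: "(real \<Rightarrow> real) \<Rightarrow> real \<Rightarrow> real" where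
  "rderiv w x = Lim (at_right 0) (\<lambda>h. (w (x + h) - w x) / h)"

text \<open>Path of Y^b under P_x (X started at x is x + X): reflected at upper barrier b.\<close>
definition reflected :: "(real \<Rightarrow> 'a \<Rightarrow> real) \<Rightarrow> real \<Rightarrow> real \<Rightarrow> 'a \<Rightarrow> real \<Rightarrow> real" where
  "reflected X b x \<omega> t =
     (x + X t \<omega>) - max (Sup ((\<lambda>s. x + X s \<omega> - b) ` {0..t})) 0"

text \<open>First passage below a: inf{t \<ge> 0. Y t < a}, with inf of the empty set = \<infinity>.\<close>
definition first_below :: "(real \<Rightarrow> real) \<Rightarrow> real \<Rightarrow> ereal" where
  "first_below Y a = Inf (ereal ` {t. 0 \<le> t \<and> Y t < a})"

definition disc :: "real \<Rightarrow> ereal \<Rightarrow> real" where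
  "disc \<alpha> k = (if k = \<infinity> then 0 else exp (- \<alpha> * real_of_ereal k))"

definition gfun :: "'a measure \<Rightarrow> (real \<Rightarrow> 'a \<Rightarrow> real) \<Rightarrow> real \<Rightarrow> real \<Rightarrow> real
                    \<Rightarrow> (real \<Rightarrow> real) \<Rightarrow> real \<Rightarrow> real" where
  "gfun M X \<alpha> \<beta> r w b =
     \<beta> * (\<integral>\<omega>. disc \<alpha> (first_below (reflected X b b \<omega>) 0) \<partial>M)
     + r * (\<integral>\<omega>. (\<integral>t. indicator {t. 0 \<le> t \<and> ereal t < first_below (reflected X b b \<omega>) 0} t
                        * exp (- \<alpha> * t) * rderiv w (reflected X b b \<omega> t) \<partial>lborel) \<partial>M)"

end

theory Submission
  imports Defs
begin

text \<open>
  Let \<open>D t = max (Sup (X ` {0..t})) 0 - X t\<close> be the drawdown of the path \<open>X\<close>. The path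
  reflected at the barrier \<open>b\<close> and started there is \<open>b - D\<close>, so \<open>\<kappa>\<^sub>b\<close> is the first time
  \<open>D\<close> exceeds \<open>b\<close>. Because \<open>exp (-\<alpha> \<kappa>) = 1 - \<alpha> \<integral>\<^sub>0\<^sup>\<kappa> exp (-\<alpha> t) dt\<close>, path by path
    \<open>\<beta> exp (-\<alpha> \<kappa>) + r \<integral>\<^sub>0\<^sup>\<kappa> exp (-\<alpha> t) w'(b - D t) dt\<close>
      \<open>= \<beta> + \<integral>\<^sub>0\<^sup>\<kappa> exp (-\<alpha> t) h (b - D t) dt\<close>
  for \<open>\<kappa> = \<kappa>\<^sub>b\<close> and \<open>h = r w' - \<alpha> \<beta>\<close>. Concavity makes \<open>h\<close> non-increasing and
  \<open>w'(0) \<le> \<beta> \<alpha> / r\<close> makes it non-positive, so raising \<open>b\<close> both lowers the integrand and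
  lengthens the range of integration of a non-positive function: the right-hand side
  decreases in \<open>b\<close>. As \<open>b \<rightarrow> \<infinity>\<close>, \<open>\<kappa>\<^sub>b \<rightarrow> \<infinity>\<close> and \<open>h (b - D t) \<rightarrow> r w'(\<infinity>) - \<alpha> \<beta>\<close>, and
  dominated convergence, first in \<open>t\<close> and then in \<open>\<omega>\<close>, gives the limit
  \<open>\<beta> + (r w'(\<infinity>) - \<alpha> \<beta>) / \<alpha> = r w'(\<infinity>) / \<alpha>\<close>.
\<close>

section \<open>Monotone and concave functions\<close>

lemma antimono_tendsto_at_top_le:
  fixes f :: "real \<Rightarrow> real"
  assumes "antimono f" "(f \<longlongrightarrow> L) at_top"
  shows "L \<le> f y"
proof (rule tendsto_upperbound[OF assms(2)])
  show "eventually (\<lambda>x. f x \<le> f y) at_top"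
    using eventually_ge_at_top[of y] by eventually_elim (rule antimonoD[OF assms(1)])
qed simp

lemma borel_measurable_antimono:
  fixes f :: "real \<Rightarrow> real"
  assumes "antimono f"
  shows "f \<in> borel_measurable borel"
proof -
  have "mono (\<lambda>x. - f x)" using assms by (auto simp: monotone_def)
  then have "(\<lambda>x. - (- f x)) \<in> borel_measurable borel" by (intro borel_measurable_uminus borel_measurable_mono)
  then show ?thesis by simp
qed

lemma concave_on_slope_le:
  fixes f :: "real \<Rightarrow> real"
  assumes f: "concave_on I f" and I: "x \<in> I" "y \<in> I" and t: "x < t" "t < y"
  shows "(f y - f x) / (y - x) \<le> (f t - f x) / (t - x)"
    and "(f y - f t) / (y - t) \<le> (f y - f x) / (y - x)"
  using convex_on_slope_le[OF f[unfolded concave_on_def] I t] t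
  by (simp_all add: field_simps)

lemma concave_on_right_slope_tendsto:
  fixes f :: "real \<Rightarrow> real"
  assumes f: "concave_on {a..} f" and x: "a < x"
  shows "((\<lambda>h. (f (x + h) - f x) / h) \<longlongrightarrow> rderiv f x) (at_right 0)"
proof -
  let ?Q = "\<lambda>h. (f (x + h) - f x) / h"
  have "((\<lambda>h. - ?Q h) \<longlongrightarrow> Inf ((\<lambda>h. - ?Q h) ` ({0<..} \<inter> UNIV))) (at 0 within ({0<..} \<inter> UNIV))"
  proof (rule Lim_right_bound[where K = "- ((f x - f a) / (x - a))"])
    fix h k :: real assume "0 < h" "h \<le> k"
    then show "- ?Q h \<le> - ?Q k"
      using concave_on_slope_le(1)[OF f, of x "x + k" "x + h"] x by (cases "h = k") auto
  next
    fix h :: real assume "0 < h"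
    then show "- ((f x - f a) / (x - a)) \<le> - ?Q h"
      using concave_on_slope_le[OF f, of a "x + h" x] x by auto
  qed
  then have "(?Q \<longlongrightarrow> - Inf ((\<lambda>h. - ?Q h) ` {0<..})) (at_right 0)"
    using tendsto_minus by fastforce
  then show ?thesis unfolding rderiv_def by (simp add: tendsto_Lim)
qed

lemma concave_on_rderiv_antimono:
  fixes f :: "real \<Rightarrow> real"
  assumes f: "concave_on {a..} f" and xy: "a \<le> x" "x \<le> y"
    and slope_x: "((\<lambda>h. (f (x + h) - f x) / h) \<longlongrightarrow> rderiv f x) (at_right 0)"
  shows "rderiv f y \<le> rderiv f x"
proof (cases "x = y")
  case False
  then have "x < y" using xy by simp
  show ?thesis
  proof (rule tendsto_le[OF _ slope_x concave_on_right_slope_tendsto[OF f]])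
    have "eventually (\<lambda>h. h \<in> {0<..<y - x}) (at_right (0::real))"
      by (rule eventually_at_right_real) (use \<open>x < y\<close> in auto)
    then show "eventually (\<lambda>h. (f (y + h) - f y) / h \<le> (f (x + h) - f x) / h) (at_right 0)"
    proof eventually_elim
      case (elim h)
      have "(f (y + h) - f y) / h \<le> (f (y + h) - f x) / (y + h - x)"
        using concave_on_slope_le(2)[OF f, of x "y + h" y] elim xy by auto
      also have "\<dots> \<le> (f y - f x) / (y - x)"
        using concave_on_slope_le(1)[OF f, of x "y + h" y] elim xy by auto
      also have "\<dots> \<le> (f (x + h) - f x) / h"
        using concave_on_slope_le(1)[OF f, of x y "x + h"] elim xy by auto
      finally show ?case .
    qed
  qed (use \<open>x < y\<close> xy in auto)
qed simp

lemma rderiv_clamped_concave: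
  assumes w: "concave_on {0..} w" and slope0: "((\<lambda>h. (w h - w 0) / h) \<longlongrightarrow> d) (at_right 0)"
    and lim: "(rderiv w \<longlongrightarrow> L) at_top"
  shows "antimono (\<lambda>y. rderiv w (max y 0))" and "rderiv w (max y 0) \<le> d"
    and "((\<lambda>y. rderiv w (max y 0)) \<longlongrightarrow> L) at_top"
proof -
  have rderiv0: "rderiv w 0 = d" using slope0 unfolding rderiv_def by (simp add: tendsto_Lim)
  have slope: "((\<lambda>h. (w (x + h) - w x) / h) \<longlongrightarrow> rderiv w x) (at_right 0)" if "0 \<le> x" for x
  proof (cases "x = 0")
    case True then show ?thesis using slope0 rderiv0 by simp
  next
    case False then show ?thesis using concave_on_right_slope_tendsto[OF w] that by simp
  qed
  show "antimono (\<lambda>y. rderiv w (max y 0))"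
    by (rule antimonoI) (rule concave_on_rderiv_antimono[OF w _ _ slope]; simp)
  show "rderiv w (max y 0) \<le> d"
    using concave_on_rderiv_antimono[OF w _ _ slope, of 0 "max y 0"] rderiv0 by simp
  show "((\<lambda>y. rderiv w (max y 0)) \<longlongrightarrow> L) at_top"
    using lim eventually_ge_at_top[of 0] by (rule Lim_transform_eventually[OF _ eventually_mono]) simp
qed

section \<open>Exponential discounting\<close>

lemma has_bochner_integral_exp_Ici:
  fixes \<alpha> c :: real
  assumes "0 < \<alpha>"
  shows "has_bochner_integral lborel (\<lambda>t. indicator {c..} t * exp (- \<alpha> * t)) (exp (- \<alpha> * c) / \<alpha>)"
proof (rule has_bochner_integral_nn_integral)
  have "(\<lambda>t. indicator {c..} t * exp (- \<alpha> * t)) = (\<lambda>t. if t \<in> {c..} then exp (- \<alpha> * t) else 0)"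
    by (auto simp: fun_eq_iff)
  then have "((\<lambda>t. indicator {c..} t * exp (- \<alpha> * t)) has_integral exp (- \<alpha> * c) / \<alpha>) UNIV"
    using has_integral_exp_minus_to_infinity[OF assms, of c] has_integral_restrict_UNIV by metis
  then show "(\<integral>\<^sup>+ t. ennreal (indicator {c..} t * exp (- \<alpha> * t)) \<partial>lborel) = ennreal (exp (- \<alpha> * c) / \<alpha>)"
    by (intro nn_integral_has_integral_lborel) auto
qed (use assms in auto)

lemma integrable_exp_Ici:
  fixes \<alpha> :: real assumes "0 < \<alpha>"
  shows "integrable lborel (\<lambda>t. indicator {0..} t * exp (- \<alpha> * t))"
  using has_bochner_integral_exp_Ici[OF assms, of 0] by (rule integrable.intros)

lemma integral_exp_Ici:
  fixes \<alpha> :: real assumes "0 < \<alpha>"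
  shows "(\<integral>t. indicator {0..} t * exp (- \<alpha> * t) \<partial>lborel) = 1 / \<alpha>"
  using has_bochner_integral_exp_Ici[OF assms, of 0] by (simp add: has_bochner_integral_integral_eq)

lemma has_bochner_integral_discount_until:
  fixes \<alpha> :: real and k :: ereal
  assumes "0 < \<alpha>" and "0 \<le> k"
  shows "has_bochner_integral lborel (\<lambda>t. indicator {t. 0 \<le> t \<and> ereal t < k} t * exp (- \<alpha> * t))
           ((1 - disc \<alpha> k) / \<alpha>)"
proof (cases k)
  case (real c)
  have "has_bochner_integral lborel
      (\<lambda>t. indicator {0..} t * exp (- \<alpha> * t) - indicator {c..} t * exp (- \<alpha> * t))
      (exp (- \<alpha> * 0) / \<alpha> - exp (- \<alpha> * c) / \<alpha>)"
    using assms by (intro has_bochner_integral_diff has_bochner_integral_exp_Ici)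
  moreover have "(\<lambda>t. indicator {0..} t * exp (- \<alpha> * t) - indicator {c..} t * exp (- \<alpha> * t))
      = (\<lambda>t. indicator {t. 0 \<le> t \<and> ereal t < k} t * exp (- \<alpha> * t))"
    using \<open>0 \<le> k\<close> real by (auto simp: indicator_def fun_eq_iff)
  ultimately show ?thesis
    using real by (simp add: disc_def diff_divide_distrib)
next
  case PInf
  then have "(\<lambda>t. indicator {t. 0 \<le> t \<and> ereal t < k} t * exp (- \<alpha> * t))
      = (\<lambda>t. indicator {0..} t * exp (- \<alpha> * t))"
    by (auto simp: indicator_def fun_eq_iff)
  then show ?thesis
    using has_bochner_integral_exp_Ici[OF \<open>0 < \<alpha>\<close>, of 0] PInf by (simp add: disc_def)
qed (use assms in auto)

lemma abs_disc_le_1: "0 < \<alpha> \<Longrightarrow> 0 \<le> k \<Longrightarrow> \<bar>disc \<alpha> k\<bar> \<le> 1"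
  by (cases k) (auto simp: disc_def)

lemma disc_add_discounted_integral:
  fixes \<alpha> \<beta> :: real and k :: ereal and f :: "real \<Rightarrow> real"
  assumes \<alpha>: "0 < \<alpha>" and k: "0 \<le> k"
    and f: "integrable lborel (\<lambda>t. indicator {t. 0 \<le> t \<and> ereal t < k} t * exp (- \<alpha> * t) * f t)"
  shows "\<beta> * disc \<alpha> k + (\<integral>t. indicator {t. 0 \<le> t \<and> ereal t < k} t * exp (- \<alpha> * t) * f t \<partial>lborel)
       = \<beta> + (\<integral>t. indicator {t. 0 \<le> t \<and> ereal t < k} t * exp (- \<alpha> * t) * (f t - \<alpha> * \<beta>) \<partial>lborel)"
proof -
  let ?e = "\<lambda>t. indicator {t. 0 \<le> t \<and> ereal t < k} t * exp (- \<alpha> * t)"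
  have e: "has_bochner_integral lborel ?e ((1 - disc \<alpha> k) / \<alpha>)"
    by (rule has_bochner_integral_discount_until[OF \<alpha> k])
  have "(\<integral>t. ?e t * (f t - \<alpha> * \<beta>) \<partial>lborel) = (\<integral>t. ?e t * f t - \<alpha> * \<beta> * ?e t \<partial>lborel)"
    by (rule Bochner_Integration.integral_cong) (simp_all add: algebra_simps)
  also have "\<dots> = (\<integral>t. ?e t * f t \<partial>lborel) - \<alpha> * \<beta> * ((1 - disc \<alpha> k) / \<alpha>)"
    using f e by (simp add: integrable.intros has_bochner_integral_integral_eq)
  also have "\<alpha> * \<beta> * ((1 - disc \<alpha> k) / \<alpha>) = \<beta> - \<beta> * disc \<alpha> k"
    using \<alpha> by (simp add: field_simps)
  finally show ?thesis by linarith
qed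

section \<open>Measurability of right-continuous functions\<close>

lemma borel_measurable_right_continuous_pair:
  fixes f :: "'a \<Rightarrow> real \<Rightarrow> real"
  assumes meas: "\<And>t. 0 \<le> t \<Longrightarrow> (\<lambda>\<omega>. f \<omega> t) \<in> borel_measurable M"
    and rcont: "\<And>\<omega> t. \<omega> \<in> space M \<Longrightarrow> 0 \<le> t \<Longrightarrow> continuous (at_right t) (f \<omega>)"
  shows "(\<lambda>z. f (fst z) (max (snd z) 0)) \<in> borel_measurable (M \<Otimes>\<^sub>M lborel)"
proof (rule borel_measurable_LIMSEQ_real)
  \<comment> \<open>rounding up to the dyadic grid approximates from the right, where \<open>f \<omega>\<close> is continuous\<close>
  define grid :: "nat \<Rightarrow> real \<Rightarrow> real" where "grid n t = max 0 (real_of_int \<lceil>2 ^ n * t\<rceil> / 2 ^ n)" for n t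
  show "(\<lambda>z. f (fst z) (grid n (max (snd z) 0))) \<in> borel_measurable (M \<Otimes>\<^sub>M lborel)" for n
    unfolding grid_def
  proof (rule measurable_compose_countable[where f = "\<lambda>k z. f (fst z) (max 0 (real_of_int k / 2 ^ n))"
        and g = "\<lambda>z. \<lceil>(2::real) ^ n * max (snd z) 0\<rceil>"])
    show "(\<lambda>z. f (fst z) (max 0 (real_of_int k / 2 ^ n))) \<in> borel_measurable (M \<Otimes>\<^sub>M lborel)" for k
      by (rule measurable_compose[OF measurable_fst meas]) simp
    show "(\<lambda>z. \<lceil>(2::real) ^ n * max (snd z) 0\<rceil>) \<in> measurable (M \<Otimes>\<^sub>M lborel) (count_space UNIV)"
      by (rule measurable_compose[OF _ measurable_real_ceiling]) measurable
  qed
  fix z :: "'a \<times> real" assume "z \<in> space (M \<Otimes>\<^sub>M lborel)"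
  then have \<omega>: "fst z \<in> space M" by (auto simp: space_pair_measure)
  define u where "u = max (snd z) 0"
  have u: "0 \<le> u" by (simp add: u_def)
  have ceiling_ge: "u \<le> real_of_int \<lceil>2 ^ n * u\<rceil> / 2 ^ n" for n
    using le_of_int_ceiling[of "2 ^ n * u"] by (simp add: field_simps)
  have grid_eq: "grid n u = real_of_int \<lceil>2 ^ n * u\<rceil> / 2 ^ n" for n
    using u ceiling_ge[of n] by (simp add: grid_def)
  have grid_ge: "u \<le> grid n u" for n
    using ceiling_ge[of n] by (simp add: grid_eq)
  have grid_le: "grid n u \<le> u + inverse (2 ^ n)" for n
    using of_int_ceiling_le_add_one[of "2 ^ n * u"] by (simp add: grid_eq field_simps)
  have "(\<lambda>n. grid n u) \<longlonglongrightarrow> u"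
  proof (rule tendsto_sandwich[of "\<lambda>n. u" _ _ "\<lambda>n. u + inverse (2 ^ n)"])
    show "(\<lambda>n. u + inverse (2 ^ n)) \<longlonglongrightarrow> u"
      using tendsto_add[OF tendsto_const LIMSEQ_inverse_realpow_zero[of 2], of u] by simp
  qed (use grid_ge grid_le in auto)
  moreover have "continuous (at u within {u..}) (f (fst z))"
    using rcont[OF \<omega> u] by (simp add: at_within_Ici_at_right)
  ultimately have "(\<lambda>n. f (fst z) (grid n u)) \<longlonglongrightarrow> f (fst z) u"
    using grid_ge unfolding continuous_within_sequentially by (simp add: comp_def)
  then show "(\<lambda>n. f (fst z) (grid n (max (snd z) 0))) \<longlonglongrightarrow> f (fst z) (max (snd z) 0)"
    by (simp add: u_def)
qed

corollary borel_measurable_right_continuous: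
  fixes g :: "real \<Rightarrow> real"
  assumes "\<And>t. 0 \<le> t \<Longrightarrow> continuous (at_right t) g"
  shows "(\<lambda>t. g (max t 0)) \<in> borel_measurable borel"
  using measurable_Pair2[OF borel_measurable_right_continuous_pair[where M = "count_space UNIV"
      and f = "\<lambda>_. g"], of "()"] assms by simp

section \<open>Cadlag paths, their drawdown and its first passage times\<close>

definition cadlag :: "(real \<Rightarrow> real) \<Rightarrow> bool" where
  "cadlag p \<longleftrightarrow> (\<forall>t\<ge>0. continuous (at_right t) p) \<and> (\<forall>t>0. \<exists>l. (p \<longlongrightarrow> l) (at_left t))"

lemma cadlag_right_tendsto: "cadlag p \<Longrightarrow> 0 \<le> t \<Longrightarrow> (p \<longlongrightarrow> p t) (at_right t)"
  by (simp add: cadlag_def continuous_within)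

lemma cadlag_locally_bounded:
  assumes p: "cadlag p" and t: "0 \<le> t"
  shows "\<exists>B. eventually (\<lambda>s. 0 \<le> s \<longrightarrow> \<bar>p s\<bar> \<le> B) (nhds t)"
proof -
  have "eventually (\<lambda>s. dist (p s) (p t) < 1) (at_right t)"
    using cadlag_right_tendsto[OF p t] by (rule tendstoD) simp
  then have right: "eventually (\<lambda>s. \<bar>p s\<bar> \<le> \<bar>p t\<bar> + 1) (at_right t)"
    by eventually_elim (auto simp: dist_real_def)
  obtain B where left: "eventually (\<lambda>s. 0 \<le> s \<longrightarrow> \<bar>p s\<bar> \<le> B) (at_left t)"
  proof (cases "t = 0")
    case True
    have "eventually (\<lambda>s. s \<in> {-1<..<t}) (at_left t)"
      by (rule eventually_at_left_real) (simp add: True)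
    then show ?thesis
      by (rule that[OF eventually_mono]) (auto simp: True)
  next
    case False
    then have "0 < t" using t by simp
    then obtain l where "(p \<longlongrightarrow> l) (at_left t)" using p unfolding cadlag_def by blast
    then have "eventually (\<lambda>s. dist (p s) l < 1) (at_left t)" by (rule tendstoD) simp
    then show ?thesis
      by (rule that[of "\<bar>l\<bar> + 1", OF eventually_mono]) (auto simp: dist_real_def)
  qed
  have "eventually (\<lambda>s. 0 \<le> s \<longrightarrow> \<bar>p s\<bar> \<le> max B (\<bar>p t\<bar> + 1)) (nhds t)"
    unfolding eventually_nhds_conv_at eventually_at_split
    using left right by (auto elim: eventually_mono)
  then show ?thesis ..
qed

lemma cadlag_bounded:
  assumes p: "cadlag p"
  shows "\<exists>B. \<forall>s\<in>{0..T}. \<bar>p s\<bar> \<le> B"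
proof -
  obtain B where "\<And>t. t \<in> {0..T} \<Longrightarrow> eventually (\<lambda>s. 0 \<le> s \<longrightarrow> \<bar>p s\<bar> \<le> B t) (nhds t)"
    using cadlag_locally_bounded[OF p] by (metis atLeastAtMost_iff)
  then obtain U where U: "\<And>t. t \<in> {0..T} \<Longrightarrow> open (U t) \<and> t \<in> U t \<and> (\<forall>s\<in>U t. 0 \<le> s \<longrightarrow> \<bar>p s\<bar> \<le> B t)"
    unfolding eventually_nhds by metis
  obtain C where C: "C \<subseteq> {0..T}" "finite C" "{0..T} \<subseteq> (\<Union>t\<in>C. U t)"
    using compactE_image[of "{0..T}" "{0..T}" U] U by blast
  show ?thesis
  proof (intro exI ballI)
    fix s assume s: "s \<in> {0..T}"
    then obtain t where t: "t \<in> C" "s \<in> U t" using C by auto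
    then have "\<bar>p s\<bar> \<le> B t" using U[of t] C s by auto
    also have "B t \<le> Max (B ` C)" using t C by (auto intro!: Max_ge)
    finally show "\<bar>p s\<bar> \<le> Max (B ` C)" .
  qed
qed

lemma cadlag_bdd_above:
  assumes "cadlag p"
  shows "bdd_above (p ` {0..t})"
proof -
  obtain B where "\<forall>s\<in>{0..t}. \<bar>p s\<bar> \<le> B" using cadlag_bounded[OF assms] by blast
  then show ?thesis by (intro bdd_aboveI2[of _ _ B]) force
qed

lemma running_Sup_right_continuous:
  assumes p: "cadlag p" and t: "0 \<le> t"
  shows "continuous (at_right t) (\<lambda>s. Sup (p ` {0..s}))"
  unfolding continuous_within
proof (rule tendstoI)
  fix e :: real assume e: "0 < e"
  have "eventually (\<lambda>s. dist (p s) (p t) < e / 2) (at_right t)"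
    using cadlag_right_tendsto[OF p t] by (rule tendstoD) (use e in simp)
  then obtain b where b: "b > t" "\<And>s. t < s \<Longrightarrow> s < b \<Longrightarrow> dist (p s) (p t) < e / 2"
    unfolding eventually_at_right_field by blast
  have "eventually (\<lambda>s. s \<in> {t<..<b}) (at_right t)" by (rule eventually_at_right_real) fact
  then show "eventually (\<lambda>s. dist (Sup (p ` {0..s})) (Sup (p ` {0..t})) < e) (at_right t)"
  proof eventually_elim
    case (elim s)
    have upper: "p u \<le> Sup (p ` {0..t})" if "u \<in> {0..t}" for u
      using that by (intro cSup_upper cadlag_bdd_above[OF p]) auto
    have "p u \<le> Sup (p ` {0..t}) + e / 2" if "u \<in> {0..s}" for u
    proof (cases "u \<le> t")
      case True then show ?thesis using upper[of u] that e by auto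
    next
      case False
      then have "dist (p u) (p t) < e / 2" using b(2)[of u] that elim by auto
      then show ?thesis using upper[of t] t abs_ge_self[of "p u - p t"] by (auto simp: dist_real_def)
    qed
    then have "Sup (p ` {0..s}) \<le> Sup (p ` {0..t}) + e / 2"
      using elim t by (intro cSup_least) auto
    moreover have "Sup (p ` {0..t}) \<le> Sup (p ` {0..s})"
      using elim t by (intro cSup_subset_mono cadlag_bdd_above[OF p]) auto
    ultimately show ?case using e by (simp add: dist_real_def)
  qed
qed

lemma running_Sup_eq_SUP_rationals:
  assumes p: "cadlag p" and t: "0 \<le> t"
  shows "Sup (p ` {0..t}) = (SUP s\<in>{s\<in>\<rat>. 0 \<le> s \<and> s \<le> t} \<union> {t}. p s)"
    (is "_ = (SUP s\<in>?D. p s)")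
proof (rule antisym)
  have bdd: "bdd_above (p ` ?D)"
    by (rule bdd_above_mono[OF cadlag_bdd_above[OF p]]) (use t in auto)
  show "Sup (p ` {0..t}) \<le> (SUP s\<in>?D. p s)"
  proof (rule cSup_least)
    fix x assume "x \<in> p ` {0..t}"
    then obtain u where u: "u \<in> {0..t}" "x = p u" by auto
    show "x \<le> (SUP s\<in>?D. p s)"
    proof (cases "u = t")
      case True
      have "p t \<le> (SUP s\<in>?D. p s)" by (rule cSUP_upper[OF _ bdd]) simp
      then show ?thesis using u True by simp
    next
      case False
      show ?thesis
      proof (rule ccontr)
        assume "\<not> x \<le> (SUP s\<in>?D. p s)"
        then have "(SUP s\<in>?D. p s) < p u" using u by simp
        moreover have "(p \<longlongrightarrow> p u) (at_right u)" using u by (intro cadlag_right_tendsto[OF p]) simp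
        ultimately have "eventually (\<lambda>s. (SUP s\<in>?D. p s) < p s) (at_right u)"
          by (intro order_tendstoD(1))
        then obtain d where d: "d > u" "\<And>s. u < s \<Longrightarrow> s < d \<Longrightarrow> (SUP s\<in>?D. p s) < p s"
          unfolding eventually_at_right_field by blast
        have "u < min d t" using d u False by auto
        then obtain q where q: "q \<in> \<rat>" "u < q" "q < min d t"
          using Rats_dense_in_real by blast
        have "p q \<le> (SUP s\<in>?D. p s)" by (rule cSUP_upper[OF _ bdd]) (use q u in auto)
        then show False using d(2)[of q] q by auto
      qed
    qed
  qed (use t in auto)
  show "(SUP s\<in>?D. p s) \<le> Sup (p ` {0..t})"
  proof (rule cSUP_least)
    fix s assume "s \<in> ?D"
    then show "p s \<le> Sup (p ` {0..t})"
      using t by (intro cSup_upper cadlag_bdd_above[OF p]) auto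
  qed simp
qed

definition first_exceed :: "(real \<Rightarrow> real) \<Rightarrow> real \<Rightarrow> ereal" where
  "first_exceed g b = Inf (ereal ` {t. 0 \<le> t \<and> b < g t})"

lemma first_exceed_mono: "b \<le> b' \<Longrightarrow> first_exceed g b \<le> first_exceed g b'"
  unfolding first_exceed_def by (intro Inf_superset_mono) auto

lemma first_exceed_nonneg: "0 \<le> first_exceed g b"
  unfolding first_exceed_def by (intro Inf_greatest) auto

lemma le_before_first_exceed:
  assumes "0 \<le> t" "ereal t < first_exceed g b"
  shows "g t \<le> b"
proof (rule ccontr)
  assume "\<not> g t \<le> b"
  then have "first_exceed g b \<le> ereal t"
    using assms(1) unfolding first_exceed_def by (intro Inf_lower) auto
  then show False using assms(2) by simp
qed

lemma eventually_less_first_exceed: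
  assumes "bdd_above (g ` {0..T})" "t < T"
  shows "eventually (\<lambda>b. ereal t < first_exceed g b) at_top"
proof -
  obtain B where B: "\<forall>s\<in>{0..T}. g s \<le> B"
    using assms(1) unfolding bdd_above_def by blast
  have T_le: "ereal T \<le> first_exceed g b" if "B < b" for b
    unfolding first_exceed_def
  proof (rule Inf_greatest)
    fix x assume "x \<in> ereal ` {t. 0 \<le> t \<and> b < g t}"
    then obtain u where u: "x = ereal u" "0 \<le> u" "b < g u" by auto
    then have "u \<notin> {0..T}" using B that by fastforce
    then show "ereal T \<le> x" using u by simp
  qed
  show ?thesis
    using eventually_gt_at_top[of B]
  proof eventually_elim
    case (elim b)
    have "ereal t < ereal T" using assms(2) by simp
    also have "\<dots> \<le> first_exceed g b" by (rule T_le[OF elim])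
    finally show ?case .
  qed
qed

lemma first_exceed_eq_INF_rationals:
  assumes g: "\<And>t. 0 \<le> t \<Longrightarrow> continuous (at_right t) g"
  shows "first_exceed g b = (INF q\<in>{q\<in>\<rat>. 0 \<le> q}. if b < g q then ereal q else \<infinity>)"
    (is "_ = ?I")
proof (rule antisym)
  show "first_exceed g b \<le> ?I"
    unfolding first_exceed_def
  proof (rule INF_greatest)
    fix q :: real assume "q \<in> {q\<in>\<rat>. 0 \<le> q}"
    then show "Inf (ereal ` {t. 0 \<le> t \<and> b < g t}) \<le> (if b < g q then ereal q else \<infinity>)"
      by (auto intro: Inf_lower)
  qed
  show "?I \<le> first_exceed g b"
    unfolding first_exceed_def
  proof (rule Inf_greatest)
    fix x assume "x \<in> ereal ` {t. 0 \<le> t \<and> b < g t}"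
    then obtain t where x: "x = ereal t" and t: "0 \<le> t" "b < g t" by auto
    show "?I \<le> x"
    proof (rule ccontr)
      assume "\<not> ?I \<le> x"
      then have "ereal t < ?I" using x by simp
      then obtain y where y: "ereal t < ereal y" "ereal y < ?I"
        using ereal_dense2 by blast
      have "eventually (\<lambda>s. b < g s) (at_right t)"
        using g[OF t(1)] t(2) unfolding continuous_within by (rule order_tendstoD(1))
      then obtain d where d: "d > t" "\<And>s. t < s \<Longrightarrow> s < d \<Longrightarrow> b < g s"
        unfolding eventually_at_right_field by blast
      have "t < min d y" using d y by simp
      then obtain q where q: "q \<in> \<rat>" "t < q" "q < min d y"
        using Rats_dense_in_real by blast
      then have "?I \<le> (if b < g q then ereal q else \<infinity>)"
        using t by (intro INF_lower) simp
      also have "\<dots> = ereal q" using d(2)[of q] q by simp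
      finally have "ereal y < ereal q" by (rule less_le_trans[OF y(2)])
      then show False using q by simp
    qed
  qed
qed

definition drawdown :: "(real \<Rightarrow> real) \<Rightarrow> real \<Rightarrow> real" where
  "drawdown p t = max (Sup (p ` {0..t})) 0 - p t"

lemma drawdown_right_continuous:
  assumes "cadlag p" "0 \<le> t"
  shows "continuous (at_right t) (drawdown p)"
  unfolding drawdown_def[abs_def] using assms
  by (intro continuous_intros running_Sup_right_continuous) (auto simp: cadlag_def)

lemma bdd_above_drawdown:
  assumes p: "cadlag p"
  shows "bdd_above (drawdown p ` {0..T})"
proof -
  obtain B where B: "\<forall>s\<in>{0..T}. \<bar>p s\<bar> \<le> B" using cadlag_bounded[OF p] by blast
  have "drawdown p s \<le> max B 0 + B" if s: "s \<in> {0..T}" for s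
  proof -
    have "p u \<le> B" if "u \<in> {0..s}" for u using B s that by (force dest: abs_le_D1)
    then have "Sup (p ` {0..s}) \<le> B" using s by (intro cSup_least) auto
    moreover have "- p s \<le> B" using B s by (force dest: abs_le_D2)
    ultimately show ?thesis by (auto simp: drawdown_def max_def)
  qed
  then show ?thesis by (rule bdd_aboveI2)
qed

lemma reflected_at_barrier: "reflected X b b \<omega> t = b - drawdown (\<lambda>s. X s \<omega>) t"
  unfolding reflected_def drawdown_def by simp

lemma first_below_reflected_at_barrier:
  "first_below (reflected X b b \<omega>) 0 = first_exceed (drawdown (\<lambda>s. X s \<omega>)) b"
  unfolding first_below_def first_exceed_def reflected_at_barrier by (rule arg_cong[where f = Inf]) auto

section \<open>The discounted integral up to ruin\<close>

text \<open>The integrand vanishes for \<open>t < 0\<close>; the \<open>max t 0\<close> only makes it Borel in \<open>t\<close>, since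
  nothing is assumed about a path at negative times.\<close>

definition discounted_until_ruin :: "real \<Rightarrow> (real \<Rightarrow> real) \<Rightarrow> (real \<Rightarrow> real) \<Rightarrow> real \<Rightarrow> real" where
  "discounted_until_ruin \<alpha> h p b =
     (\<integral>t. indicator {t. 0 \<le> t \<and> ereal t < first_exceed (drawdown p) b} t * exp (- \<alpha> * t)
          * h (b - drawdown p (max t 0)) \<partial>lborel)"

context
  fixes \<alpha> K :: real and h p :: "real \<Rightarrow> real"
  assumes p: "cadlag p" and \<alpha>: "0 < \<alpha>"
    and h_measurable: "h \<in> borel_measurable borel" and h_bounded: "\<And>y. \<bar>h y\<bar> \<le> K"
begin

lemma abs_until_ruin_integrand_le:
  "\<bar>indicator {t. 0 \<le> t \<and> ereal t < first_exceed (drawdown p) b} t * exp (- \<alpha> * t) * h (b - drawdown p (max t 0))\<bar>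
     \<le> K * (indicator {0..} t * exp (- \<alpha> * t))"
  using h_bounded[of "b - drawdown p (max t 0)"]
  by (auto simp: indicator_def abs_mult mult.commute intro: mult_right_mono)

lemma integrable_until_ruin_integrand:
  "integrable lborel (\<lambda>t. indicator {t. 0 \<le> t \<and> ereal t < first_exceed (drawdown p) b} t * exp (- \<alpha> * t)
     * h (b - drawdown p (max t 0)))"
proof (rule Bochner_Integration.integrable_bound)
  show "integrable lborel (\<lambda>t. K * (indicator {0..} t * exp (- \<alpha> * t)))"
    using integrable_exp_Ici[OF \<alpha>] by simp
  have [measurable]: "(\<lambda>t. drawdown p (max t 0)) \<in> borel_measurable borel"
    using drawdown_right_continuous[OF p] by (rule borel_measurable_right_continuous)
  note h_measurable[measurable]
  show "(\<lambda>t. indicator {t. 0 \<le> t \<and> ereal t < first_exceed (drawdown p) b} t * exp (- \<alpha> * t)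
     * h (b - drawdown p (max t 0))) \<in> borel_measurable lborel"
    by measurable
  show "AE t in lborel. norm (indicator {t. 0 \<le> t \<and> ereal t < first_exceed (drawdown p) b} t * exp (- \<alpha> * t)
     * h (b - drawdown p (max t 0))) \<le> norm (K * (indicator {0..} t * exp (- \<alpha> * t)))"
    unfolding real_norm_def by (intro AE_I2 order_trans[OF abs_until_ruin_integrand_le abs_ge_self])
qed

lemma abs_discounted_until_ruin_le: "\<bar>discounted_until_ruin \<alpha> h p b\<bar> \<le> K / \<alpha>"
proof -
  have "norm (discounted_until_ruin \<alpha> h p b) \<le> (\<integral>t. K * (indicator {0..} t * exp (- \<alpha> * t)) \<partial>lborel)"
    unfolding discounted_until_ruin_def
    using integrable_until_ruin_integrand integrable_exp_Ici[OF \<alpha>] abs_until_ruin_integrand_le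
    by (intro Bochner_Integration.integral_norm_bound_integral) auto
  then show ?thesis using integral_exp_Ici[OF \<alpha>] by simp
qed

lemma discounted_until_ruin_antimono:
  assumes h_antimono: "antimono h" and h_nonpos: "\<And>y. h y \<le> 0"
  shows "antimono (discounted_until_ruin \<alpha> h p)"
proof (rule antimonoI)
  fix b b' :: real assume "b \<le> b'"
  then have ruin_le: "first_exceed (drawdown p) b \<le> first_exceed (drawdown p) b'"
    by (rule first_exceed_mono)
  show "discounted_until_ruin \<alpha> h p b' \<le> discounted_until_ruin \<alpha> h p b"
    unfolding discounted_until_ruin_def
  proof (intro integral_mono integrable_until_ruin_integrand)
    fix t :: real
    have "h (b' - drawdown p (max t 0)) \<le> h (b - drawdown p (max t 0))"
      using \<open>b \<le> b'\<close> by (intro antimonoD[OF h_antimono]) simp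
    then show "indicator {t. 0 \<le> t \<and> ereal t < first_exceed (drawdown p) b'} t * exp (- \<alpha> * t)
          * h (b' - drawdown p (max t 0))
        \<le> indicator {t. 0 \<le> t \<and> ereal t < first_exceed (drawdown p) b} t * exp (- \<alpha> * t)
          * h (b - drawdown p (max t 0))"
      using ruin_le h_nonpos[of "b' - drawdown p (max t 0)"]
      by (auto simp: indicator_def mult_nonneg_nonpos)
  qed
qed

lemma discounted_until_ruin_tendsto:
  assumes h_lim: "(h \<longlongrightarrow> c) at_top"
  shows "(discounted_until_ruin \<alpha> h p \<longlongrightarrow> c / \<alpha>) at_top"
proof -
  have "((\<lambda>b. discounted_until_ruin \<alpha> h p b)
      \<longlongrightarrow> (\<integral>t. c * (indicator {0..} t * exp (- \<alpha> * t)) \<partial>lborel)) at_top"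
    unfolding discounted_until_ruin_def
  proof (rule integral_dominated_convergence_at_top[where w = "\<lambda>t. K * (indicator {0..} t * exp (- \<alpha> * t))"])
    show "AE t in lborel. ((\<lambda>b. indicator {t. 0 \<le> t \<and> ereal t < first_exceed (drawdown p) b} t
        * exp (- \<alpha> * t) * h (b - drawdown p (max t 0))) \<longlongrightarrow> c * (indicator {0..} t * exp (- \<alpha> * t))) at_top"
    proof (rule AE_I2)
      fix t :: real
      show "((\<lambda>b. indicator {t. 0 \<le> t \<and> ereal t < first_exceed (drawdown p) b} t
          * exp (- \<alpha> * t) * h (b - drawdown p (max t 0))) \<longlongrightarrow> c * (indicator {0..} t * exp (- \<alpha> * t))) at_top"
      proof (cases "0 \<le> t")
        case True
        have "eventually (\<lambda>b. ereal t < first_exceed (drawdown p) b) at_top"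
          using bdd_above_drawdown[OF p, of "t + 1"] by (rule eventually_less_first_exceed) simp
        then have ruin_later: "eventually (\<lambda>b. exp (- \<alpha> * t) * h (b - drawdown p t)
            = indicator {t. 0 \<le> t \<and> ereal t < first_exceed (drawdown p) b} t
              * exp (- \<alpha> * t) * h (b - drawdown p (max t 0))) at_top"
          by eventually_elim (use True in simp)
        have "filterlim (\<lambda>b. b - drawdown p t) at_top at_top"
          by (rule filterlim_tendsto_add_at_top[OF tendsto_const filterlim_ident, of "- drawdown p t", simplified])
        then have "((\<lambda>b. exp (- \<alpha> * t) * h (b - drawdown p t)) \<longlongrightarrow> exp (- \<alpha> * t) * c) at_top"
          by (intro tendsto_mult_left filterlim_compose[OF h_lim])
        then have "((\<lambda>b. exp (- \<alpha> * t) * h (b - drawdown p t))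
            \<longlongrightarrow> c * (indicator {0..} t * exp (- \<alpha> * t))) at_top"
          using True by (simp add: mult.commute)
        then show ?thesis by (rule Lim_transform_eventually[OF _ ruin_later])
      qed simp
    qed
  qed (use integrable_exp_Ici[OF \<alpha>] integrable_until_ruin_integrand abs_until_ruin_integrand_le in
       \<open>auto intro: borel_measurable_integrable\<close>)
  then show ?thesis using integral_exp_Ici[OF \<alpha>] by simp
qed

end

lemma disc_add_integral_rderiv_until_ruin:
  fixes \<phi> :: "real \<Rightarrow> real"
  assumes p: "cadlag p" and \<alpha>: "0 < \<alpha>"
    and \<phi>_measurable: "\<phi> \<in> borel_measurable borel" and \<phi>_bounded: "\<And>y. \<bar>\<phi> y\<bar> \<le> K"
    and \<phi>_rderiv: "\<And>y. 0 \<le> y \<Longrightarrow> \<phi> y = rderiv w y"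
  shows "\<beta> * disc \<alpha> (first_exceed (drawdown p) b)
      + r * (\<integral>t. indicator {t. 0 \<le> t \<and> ereal t < first_exceed (drawdown p) b} t * exp (- \<alpha> * t)
               * rderiv w (b - drawdown p t) \<partial>lborel)
    = \<beta> + discounted_until_ruin \<alpha> (\<lambda>y. r * \<phi> y - \<alpha> * \<beta>) p b"
proof -
  let ?e = "\<lambda>t. indicator {t. 0 \<le> t \<and> ereal t < first_exceed (drawdown p) b} t * exp (- \<alpha> * t)"
  have "r * (\<integral>t. ?e t * rderiv w (b - drawdown p t) \<partial>lborel)
      = (\<integral>t. ?e t * (r * \<phi> (b - drawdown p (max t 0))) \<partial>lborel)"
  proof (subst integral_mult_right_zero[symmetric], rule Bochner_Integration.integral_cong)
    fix t :: real
    show "r * (?e t * rderiv w (b - drawdown p t)) = ?e t * (r * \<phi> (b - drawdown p (max t 0)))"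
    proof (cases "0 \<le> t \<and> ereal t < first_exceed (drawdown p) b")
      case True
      then have "0 \<le> b - drawdown p t" using le_before_first_exceed by fastforce
      then show ?thesis using True by (simp add: \<phi>_rderiv)
    qed auto
  qed simp
  moreover have "integrable lborel (\<lambda>t. ?e t * (r * \<phi> (b - drawdown p (max t 0))))"
  proof (rule integrable_until_ruin_integrand[OF p \<alpha>])
    show "(\<lambda>y. r * \<phi> y) \<in> borel_measurable borel" using \<phi>_measurable by measurable
    show "\<bar>r * \<phi> y\<bar> \<le> \<bar>r\<bar> * K" for y
      unfolding abs_mult by (rule mult_left_mono[OF \<phi>_bounded abs_ge_zero])
  qed
  ultimately show ?thesis
    using disc_add_discounted_integral[OF \<alpha> first_exceed_nonneg, where \<beta> = \<beta>]
    by (simp add: discounted_until_ruin_def mult.assoc)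
qed

section \<open>Processes with cadlag paths\<close>

locale cadlag_process = prob_space M for M :: "'a measure" +
  fixes X :: "real \<Rightarrow> 'a \<Rightarrow> real"
  assumes measurable_X: "\<And>t. 0 \<le> t \<Longrightarrow> X t \<in> borel_measurable M"
    and cadlag_paths: "\<And>\<omega>. \<omega> \<in> space M \<Longrightarrow> cadlag (\<lambda>t. X t \<omega>)"

lemma levy_process_imp_cadlag_process: "levy_process M X \<Longrightarrow> cadlag_process M X"
  unfolding levy_process_def cadlag_process_def cadlag_process_axioms_def cadlag_def by auto

context cadlag_process
begin

lemma measurable_drawdown:
  assumes t: "0 \<le> t"
  shows "(\<lambda>\<omega>. drawdown (\<lambda>s. X s \<omega>) t) \<in> borel_measurable M"
proof -
  let ?D = "{s\<in>\<rat>. 0 \<le> s \<and> s \<le> t} \<union> {t}"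
  have "countable ?D"
    by (rule countable_Un[OF countable_subset[OF _ countable_rat]]) auto
  then have [measurable]: "(\<lambda>\<omega>. SUP s\<in>?D. X s \<omega>) \<in> borel_measurable M"
  proof (rule borel_measurable_cSUP)
    show "X s \<in> borel_measurable M" if "s \<in> ?D" for s
      using that t by (intro measurable_X) auto
    show "bdd_above ((\<lambda>s. X s \<omega>) ` ?D)" if "\<omega> \<in> space M" for \<omega>
      by (rule bdd_above_mono[OF cadlag_bdd_above[OF cadlag_paths[OF that]]]) (use t in auto)
  qed
  have [measurable]: "X t \<in> borel_measurable M" using measurable_X[OF t] .
  have "(\<lambda>\<omega>. max (SUP s\<in>?D. X s \<omega>) 0 - X t \<omega>) \<in> borel_measurable M" by measurable
  then show ?thesis
    by (rule measurable_cong[THEN iffD1, rotated])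
       (simp add: drawdown_def running_Sup_eq_SUP_rationals[OF cadlag_paths t])
qed

lemma measurable_ruin_time: "(\<lambda>\<omega>. first_exceed (drawdown (\<lambda>s. X s \<omega>)) b) \<in> borel_measurable M"
proof -
  let ?Q = "{q\<in>\<rat>. 0 \<le> q}"
  have "countable ?Q" by (rule countable_subset[OF _ countable_rat]) auto
  then have "(\<lambda>\<omega>. INF q\<in>?Q. if b < drawdown (\<lambda>s. X s \<omega>) q then ereal q else \<infinity>) \<in> borel_measurable M"
  proof (rule borel_measurable_INF)
    fix q :: real assume "q \<in> ?Q"
    then have [measurable]: "(\<lambda>\<omega>. drawdown (\<lambda>s. X s \<omega>) q) \<in> borel_measurable M"
      by (intro measurable_drawdown) auto
    show "(\<lambda>\<omega>. if b < drawdown (\<lambda>s. X s \<omega>) q then ereal q else \<infinity>) \<in> borel_measurable M"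
      by measurable
  qed
  then show ?thesis
    by (rule measurable_cong[THEN iffD1, rotated])
       (simp add: first_exceed_eq_INF_rationals drawdown_right_continuous cadlag_paths)
qed

lemma measurable_discounted_until_ruin:
  assumes [measurable]: "h \<in> borel_measurable borel"
  shows "(\<lambda>\<omega>. discounted_until_ruin \<alpha> h (\<lambda>s. X s \<omega>) b) \<in> borel_measurable M"
proof -
  have [measurable]: "(\<lambda>z. drawdown (\<lambda>s. X s (fst z)) (max (snd z) 0)) \<in> borel_measurable (M \<Otimes>\<^sub>M lborel)"
    using measurable_drawdown drawdown_right_continuous[OF cadlag_paths]
    by (rule borel_measurable_right_continuous_pair)
  have [measurable]: "(\<lambda>z. first_exceed (drawdown (\<lambda>s. X s (fst z))) b) \<in> borel_measurable (M \<Otimes>\<^sub>M lborel)"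
    by (rule measurable_compose[OF measurable_fst measurable_ruin_time])
  have "(\<lambda>(\<omega>, t). indicator {t. 0 \<le> t \<and> ereal t < first_exceed (drawdown (\<lambda>s. X s \<omega>)) b} t
      * exp (- \<alpha> * t) * h (b - drawdown (\<lambda>s. X s \<omega>) (max t 0))) \<in> borel_measurable (M \<Otimes>\<^sub>M lborel)"
    unfolding split_beta' by measurable
  then show ?thesis
    unfolding discounted_until_ruin_def by (rule lborel.borel_measurable_lebesgue_integral)
qed

lemma integrable_discounted_until_ruin:
  assumes "0 < \<alpha>" "h \<in> borel_measurable borel" "\<And>y. \<bar>h y\<bar> \<le> K"
  shows "integrable M (\<lambda>\<omega>. discounted_until_ruin \<alpha> h (\<lambda>s. X s \<omega>) b)"
  using abs_discounted_until_ruin_le[OF cadlag_paths assms]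
  by (intro integrable_const_bound[OF _ measurable_discounted_until_ruin[OF assms(2)]] AE_I2) auto

lemma expectation_discounted_until_ruin:
  assumes \<alpha>: "0 < \<alpha>" and h_antimono: "antimono h" and h_lim: "(h \<longlongrightarrow> c) at_top"
    and h_nonpos: "\<And>y. h y \<le> 0"
  shows "antimono (\<lambda>b. expectation (\<lambda>\<omega>. discounted_until_ruin \<alpha> h (\<lambda>s. X s \<omega>) b))"
    and "((\<lambda>b. expectation (\<lambda>\<omega>. discounted_until_ruin \<alpha> h (\<lambda>s. X s \<omega>) b)) \<longlongrightarrow> c / \<alpha>) at_top"
proof -
  have h_measurable: "h \<in> borel_measurable borel" by (rule borel_measurable_antimono[OF h_antimono])
  have h_bounded: "\<bar>h y\<bar> \<le> \<bar>c\<bar>" for y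
    using antimono_tendsto_at_top_le[OF h_antimono h_lim, of y] h_nonpos[of y] by linarith
  note pathwise = abs_discounted_until_ruin_le discounted_until_ruin_antimono discounted_until_ruin_tendsto
  note pathwise = pathwise[OF cadlag_paths \<alpha> h_measurable h_bounded]
  have bound: "AE \<omega> in M. norm (discounted_until_ruin \<alpha> h (\<lambda>s. X s \<omega>) b) \<le> \<bar>c\<bar> / \<alpha>" for b
    using pathwise(1) by (intro AE_I2) auto
  note integrable = integrable_discounted_until_ruin[OF \<alpha> h_measurable h_bounded]
  show "antimono (\<lambda>b. expectation (\<lambda>\<omega>. discounted_until_ruin \<alpha> h (\<lambda>s. X s \<omega>) b))"
  proof (rule antimonoI)
    fix b b' :: real assume "b \<le> b'"
    show "expectation (\<lambda>\<omega>. discounted_until_ruin \<alpha> h (\<lambda>s. X s \<omega>) b')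
        \<le> expectation (\<lambda>\<omega>. discounted_until_ruin \<alpha> h (\<lambda>s. X s \<omega>) b)"
    proof (rule integral_mono[OF integrable integrable])
      fix \<omega> assume "\<omega> \<in> space M"
      from antimonoD[OF pathwise(2)[OF this h_antimono h_nonpos] \<open>b \<le> b'\<close>]
      show "discounted_until_ruin \<alpha> h (\<lambda>s. X s \<omega>) b' \<le> discounted_until_ruin \<alpha> h (\<lambda>s. X s \<omega>) b" .
    qed
  qed
  have "((\<lambda>b. expectation (\<lambda>\<omega>. discounted_until_ruin \<alpha> h (\<lambda>s. X s \<omega>) b)) \<longlongrightarrow> expectation (\<lambda>_. c / \<alpha>)) at_top"
  proof (rule integral_dominated_convergence_at_top[where w = "\<lambda>_. \<bar>c\<bar> / \<alpha>"])
    show "(\<lambda>\<omega>. discounted_until_ruin \<alpha> h (\<lambda>s. X s \<omega>) b) \<in> borel_measurable M" for b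
      by (rule measurable_discounted_until_ruin[OF h_measurable])
    show "AE \<omega> in M. ((\<lambda>b. discounted_until_ruin \<alpha> h (\<lambda>s. X s \<omega>) b) \<longlongrightarrow> c / \<alpha>) at_top"
      using pathwise(3)[OF _ h_lim] by (intro AE_I2) simp
    show "\<forall>\<^sub>F b in at_top. AE \<omega> in M. norm (discounted_until_ruin \<alpha> h (\<lambda>s. X s \<omega>) b) \<le> \<bar>c\<bar> / \<alpha>"
      using bound by simp
  qed simp_all
  then show "((\<lambda>b. expectation (\<lambda>\<omega>. discounted_until_ruin \<alpha> h (\<lambda>s. X s \<omega>) b)) \<longlongrightarrow> c / \<alpha>) at_top"
    by (simp add: prob_space)
qed

lemma gfun_eq_expectation:
  fixes \<phi> :: "real \<Rightarrow> real"
  assumes \<alpha>: "0 < \<alpha>" and r: "0 < r"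
    and \<phi>_measurable: "\<phi> \<in> borel_measurable borel" and \<phi>_bounded: "\<And>y. \<bar>\<phi> y\<bar> \<le> K"
    and \<phi>_rderiv: "\<And>y. 0 \<le> y \<Longrightarrow> \<phi> y = rderiv w y"
  shows "gfun M X \<alpha> \<beta> r w b
    = \<beta> + expectation (\<lambda>\<omega>. discounted_until_ruin \<alpha> (\<lambda>y. r * \<phi> y - \<alpha> * \<beta>) (\<lambda>s. X s \<omega>) b)"
proof -
  define \<kappa> where "\<kappa> \<omega> = first_exceed (drawdown (\<lambda>s. X s \<omega>)) b" for \<omega>
  define D where "D = (\<lambda>\<omega>. discounted_until_ruin \<alpha> (\<lambda>y. r * \<phi> y - \<alpha> * \<beta>) (\<lambda>s. X s \<omega>) b)"
  define I where "I \<omega> = (\<integral>t. indicator {t. 0 \<le> t \<and> ereal t < \<kappa> \<omega>} t * exp (- \<alpha> * t)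
    * rderiv w (b - drawdown (\<lambda>s. X s \<omega>) t) \<partial>lborel)" for \<omega>
  have h_measurable: "(\<lambda>y. r * \<phi> y - \<alpha> * \<beta>) \<in> borel_measurable borel" using \<phi>_measurable by measurable
  have h_bounded: "\<bar>r * \<phi> y - \<alpha> * \<beta>\<bar> \<le> r * K + \<bar>\<alpha> * \<beta>\<bar>" for y
  proof -
    have "\<bar>r * \<phi> y\<bar> \<le> r * K" using mult_left_mono[OF \<phi>_bounded[of y], of r] r by (simp add: abs_mult)
    then show ?thesis using abs_triangle_ineq4[of "r * \<phi> y" "\<alpha> * \<beta>"] by linarith
  qed
  have D_integrable: "integrable M D"
    unfolding D_def by (rule integrable_discounted_until_ruin[OF \<alpha> h_measurable h_bounded])
  have disc_integrable: "integrable M (\<lambda>\<omega>. disc \<alpha> (\<kappa> \<omega>))"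
  proof (rule integrable_const_bound[where B = 1])
    show "AE \<omega> in M. norm (disc \<alpha> (\<kappa> \<omega>)) \<le> 1"
      using \<alpha> by (intro AE_I2) (simp add: abs_disc_le_1 \<kappa>_def first_exceed_nonneg)
    have [measurable]: "\<kappa> \<in> borel_measurable M" unfolding \<kappa>_def[abs_def] by (rule measurable_ruin_time)
    show "(\<lambda>\<omega>. disc \<alpha> (\<kappa> \<omega>)) \<in> borel_measurable M" unfolding disc_def by measurable
  qed
  have "I \<omega> = (\<beta> + D \<omega> - \<beta> * disc \<alpha> (\<kappa> \<omega>)) / r" if "\<omega> \<in> space M" for \<omega>
    using disc_add_integral_rderiv_until_ruin[OF cadlag_paths[OF that] \<alpha> \<phi>_measurable \<phi>_bounded \<phi>_rderiv,
        of \<beta> b r] r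
    by (simp add: I_def D_def \<kappa>_def field_simps)
  then have "expectation I = expectation (\<lambda>\<omega>. (\<beta> + D \<omega> - \<beta> * disc \<alpha> (\<kappa> \<omega>)) / r)"
    by (rule Bochner_Integration.integral_cong[OF refl])
  also have "\<dots> = (\<beta> + expectation D - \<beta> * expectation (\<lambda>\<omega>. disc \<alpha> (\<kappa> \<omega>))) / r"
    using D_integrable disc_integrable by (simp add: prob_space)
  moreover have "gfun M X \<alpha> \<beta> r w b = \<beta> * expectation (\<lambda>\<omega>. disc \<alpha> (\<kappa> \<omega>)) + r * expectation I"
    unfolding gfun_def I_def[abs_def] \<kappa>_def first_below_reflected_at_barrier reflected_at_barrier ..
  ultimately have "gfun M X \<alpha> \<beta> r w b = \<beta> + expectation D" using r by (simp add: field_simps)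
  then show ?thesis by (simp only: D_def)
qed

end

theorem lemma2p8:
  fixes M :: "'a measure" and X :: "real \<Rightarrow> 'a \<Rightarrow> real"
    and q r \<alpha> \<beta> Linf :: real and w :: "real \<Rightarrow> real"
  assumes levy: "levy_process M X"
    and int1: "integrable M (X 1)"
    and not_cpp: "\<not> driftless_compound_poisson M X"
    and q: "q > 0" and r: "r > 0" and alpha: "\<alpha> = q + r" and beta: "\<beta> > 1"
    and w_mono: "mono_on {0..} w"
    and w_cont: "continuous_on {0..} w"
    and w_conc: "concave_on {0..} w"
    and w0: "\<exists>d. ((\<lambda>h. (w h - w 0) / h) \<longlongrightarrow> d) (at_right 0) \<and> d \<le> \<beta> * \<alpha> / r"
    and winf: "(rderiv w \<longlongrightarrow> Linf) at_top"
    and Linf: "0 \<le> Linf" "Linf < \<alpha> / r"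
  shows "antimono_on {0..} (gfun M X \<alpha> \<beta> r w)
       \<and> (gfun M X \<alpha> \<beta> r w \<longlongrightarrow> r / \<alpha> * Linf) at_top
       \<and> r / \<alpha> * Linf < 1"
proof -
  interpret cadlag_process M X using levy by (rule levy_process_imp_cadlag_process)
  have \<alpha>: "0 < \<alpha>" using alpha q r by simp
  obtain d where slope0: "((\<lambda>h. (w h - w 0) / h) \<longlongrightarrow> d) (at_right 0)" and d: "r * d \<le> \<alpha> * \<beta>"
    using w0 r by (auto simp: field_simps)
  define \<phi> where "\<phi> = (\<lambda>y. rderiv w (max y 0))"
  have \<phi>: "antimono \<phi>" "\<phi> y \<le> d" "(\<phi> \<longlongrightarrow> Linf) at_top" for y
    unfolding \<phi>_def by (rule rderiv_clamped_concave[OF w_conc slope0 winf])+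
  have \<phi>_bounded: "\<bar>\<phi> y\<bar> \<le> \<bar>Linf\<bar> + \<bar>d\<bar>" for y
    using antimono_tendsto_at_top_le[OF \<phi>(1,3), of y] \<phi>(2)[of y] by linarith
  define h where "h = (\<lambda>y. r * \<phi> y - \<alpha> * \<beta>)"
  have h_antimono: "antimono h" using \<phi>(1) r by (auto simp: h_def monotone_def)
  have h_lim: "(h \<longlongrightarrow> r * Linf - \<alpha> * \<beta>) at_top" unfolding h_def by (intro tendsto_intros \<phi>(3))
  have h_nonpos: "h y \<le> 0" for y
    using mult_left_mono[OF \<phi>(2)[of y], of r] r d unfolding h_def by linarith
  have g: "gfun M X \<alpha> \<beta> r w = (\<lambda>b. \<beta> + expectation (\<lambda>\<omega>. discounted_until_ruin \<alpha> h (\<lambda>s. X s \<omega>) b))"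
    unfolding h_def
    by (intro ext gfun_eq_expectation[OF \<alpha> r borel_measurable_antimono[OF \<phi>(1)] \<phi>_bounded])
       (simp add: \<phi>_def)
  note E = expectation_discounted_until_ruin[OF \<alpha> h_antimono h_lim h_nonpos]
  have "\<beta> + (r * Linf - \<alpha> * \<beta>) / \<alpha> = r / \<alpha> * Linf" using \<alpha> by (simp add: field_simps)
  then have "(gfun M X \<alpha> \<beta> r w \<longlongrightarrow> r / \<alpha> * Linf) at_top"
    unfolding g using tendsto_add[OF tendsto_const E(2), of \<beta>] by simp
  moreover have "antimono_on {0..} (gfun M X \<alpha> \<beta> r w)"
    unfolding g using E(1) by (auto simp: monotone_on_def monotone_def)
  moreover have "r / \<alpha> * Linf < 1" using Linf(2) r \<alpha> by (simp add: field_simps)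
  ultimately show ?thesis by blast
qed

end
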